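(* Fix $1<p<\infty$ and an integer $r>1$; let $s=r^{1/p}$, $M=\lfloor\log_2 r\rfloor$ and let $\alpha>0$ satisfy $\alpha^M=s$. Let $(x_n)\subseteq\mathcal N_\alpha$ be a block sequence with $\alpha^{-2}\le\|x_n\|_p\le\alpha^{-1}$ for all $n\in\mathbb N$. Then there is a block sequence $(y_n)\subseteq\mathcal N_\alpha$ of $(x_n)$ (i.e. $y_n=\sum_{i\in F_n}c_ix_i$ for finite sets $F_1<F_2<\dots$ of indices and real scalars $c_i$) such that $\alpha^{-3}\le\|J_my_n\|_p\le 1$ for all $n,m\in\mathbb N$.
   Context: $c_{00}$ = finitely supported real sequences; a block sequence $(x_n)$ means $\max{\rm supp}\,x_n<\min{\rm supp}\,x_{n+1}$. For $\beta>0$ let $C_\beta=\{\pm\beta^j: j\in\mathbb Z\}\cup\{0\}$ and $\mathcal N_\beta=\{x\in c_{00}: x(i)\in C_\beta\ \forall i\}$. For $x\in\mathcal N_\alpha$ and $m\in\mathbb N$, $J_{m,x}=\{i\in{\rm supp}\,x: \alpha^{-m}x(i)\in C_s\}$ and $J_mx$ is the restriction of $x$ to $J_{m,x}$. *)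

theory Defs
  imports Complex_Main
begin

definition supp :: "(nat \<Rightarrow> real) \<Rightarrow> nat set" where
  "supp x = {i. x i \<noteq> 0}"

definition c00 :: "(nat \<Rightarrow> real) set" where
  "c00 = {x. finite (supp x)}"

definition Cset :: "real \<Rightarrow> real set" where
  "Cset \<beta> = {y. \<exists>j::int. y = \<beta> powi j \<or> y = - (\<beta> powi j)} \<union> {0}"

definition Nset :: "real \<Rightarrow> (nat \<Rightarrow> real) set" where
  "Nset \<beta> = {x \<in> c00. \<forall>i. x i \<in> Cset \<beta>}"

definition block_seq :: "(nat \<Rightarrow> nat \<Rightarrow> real) \<Rightarrow> bool" where
  "block_seq x \<longleftrightarrow> (\<forall>n. x n \<in> c00 \<and> x n \<noteq> (\<lambda>_. 0) \<and>
      (\<forall>i\<in>supp (x n). \<forall>j\<in>supp (x (Suc n)). i < j))"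

definition block_seq_of :: "(nat \<Rightarrow> nat \<Rightarrow> real) \<Rightarrow> (nat \<Rightarrow> nat \<Rightarrow> real) \<Rightarrow> bool" where
  "block_seq_of y x \<longleftrightarrow> block_seq y \<and>
     (\<exists>F :: nat \<Rightarrow> nat set. \<exists>c :: nat \<Rightarrow> real.
        (\<forall>n. finite (F n) \<and> F n \<noteq> {} \<and> (\<forall>i\<in>F n. \<forall>j\<in>F (Suc n). i < j)) \<and>
        (\<forall>n. y n = (\<lambda>k. \<Sum>i\<in>F n. c i * x i k)))"

definition lpnorm :: "real \<Rightarrow> (nat \<Rightarrow> real) \<Rightarrow> real" where
  "lpnorm p x = (\<Sum>i\<in>supp x. \<bar>x i\<bar> powr p) powr (1 / p)"

definition Jset :: "real \<Rightarrow> real \<Rightarrow> nat \<Rightarrow> (nat \<Rightarrow> real) \<Rightarrow> nat set" where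
  "Jset \<alpha> s m x = {i \<in> supp x. \<alpha> powi (- int m) * x i \<in> Cset s}"

definition Jop :: "real \<Rightarrow> real \<Rightarrow> nat \<Rightarrow> (nat \<Rightarrow> real) \<Rightarrow> (nat \<Rightarrow> real)" where
  "Jop \<alpha> s m x = (\<lambda>i. if i \<in> Jset \<alpha> s m x then x i else 0)"

end

(* Put B = alpha^p.  Since B^M = r >= 2^M, we have B >= 2.  Every coordinate of z in N_alpha is
   +-alpha^e, and it belongs to J_{m,z} exactly when e = m (mod M).  Hence ||J_m z||_p^p depends
   only on m mod M, and the M residue classes split ||z||_p^p into a profile of M masses.  By
   pigeonhole, a subsequence of (x_n) has profiles that agree up to delta = B^(-3) / M.
   Multiplying a block by alpha^(-k) rotates its profile by k and scales it by B^(-k).  So taking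
   ceil(B^k) fresh blocks at each level k < M gives vectors y_n for which ||J_m y_n||_p^p is,
   for every m, the total L of the common profile up to a factor in [1, 3/2] and an error
   M delta = B^(-3).  As B^(-2) - B^(-3) <= L <= B^(-1) and B >= 2, this yields
   alpha^(-3) <= ||J_m y_n||_p <= 1. *)

theory Submission
  imports Defs "HOL-Library.Infinite_Set" "HOL-Library.Disjoint_Sets"
begin

section \<open>Supports, integer powers and the sets \<open>C\<^sub>\<beta>\<close>\<close>

lemma supp_eq_empty_iff: "supp z = {} \<longleftrightarrow> z = (\<lambda>_. 0)"
  unfolding supp_def by auto

lemma sum_eq_single_supp:
  assumes "finite L" "l \<in> L" "i \<in> supp (z l)" "disjoint_family_on (\<lambda>l. supp (z l)) L"
  shows "(\<Sum>l'\<in>L. z l' i) = z l i"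
proof -
  have "z l' i = 0" if "l' \<in> L - {l}" for l'
    using assms(2-4) that unfolding disjoint_family_on_def supp_def by blast
  then show ?thesis
    using sum.mono_neutral_right[OF assms(1), of "{l}" "\<lambda>l'. z l' i"] assms(2) by simp
qed

lemma supp_sum_disjoint:
  assumes "finite L" "disjoint_family_on (\<lambda>l. supp (z l)) L"
  shows "supp (\<lambda>i. \<Sum>l\<in>L. z l i) = (\<Union>l\<in>L. supp (z l))"
  using sum_eq_single_supp[OF assms(1) _ _ assms(2)]
  unfolding supp_def by (auto elim: sum.not_neutral_contains_not_neutral)

lemma Cset_uminus_iff: "- y \<in> Cset s \<longleftrightarrow> y \<in> Cset s"
  unfolding Cset_def by (auto, metis minus_minus)+

lemma Cset_abs_iff: "\<bar>y\<bar> \<in> Cset s \<longleftrightarrow> y \<in> Cset s"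
  by (cases "y \<ge> 0") (auto simp: Cset_uminus_iff)

lemma Cset_power_int_mult:
  assumes "s \<noteq> 0" "y \<in> Cset s"
  shows "s powi k * y \<in> Cset s"
proof -
  from assms(2) consider "y = 0" | j where "y = s powi j \<or> y = - (s powi j)"
    unfolding Cset_def by auto
  then show ?thesis
  proof cases
    case (2 j)
    then have "s powi k * y = s powi (k + j) \<or> s powi k * y = - (s powi (k + j))"
      using assms(1) by (auto simp: power_int_add)
    then show ?thesis unfolding Cset_def by blast
  qed (simp add: Cset_def)
qed

lemma Cset_power_int_mult_iff:
  assumes "s \<noteq> 0"
  shows "s powi k * y \<in> Cset s \<longleftrightarrow> y \<in> Cset s"
proof
  assume "s powi k * y \<in> Cset s"
  from Cset_power_int_mult[OF assms this, of "- k"] show "y \<in> Cset s"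
    using assms by (simp add: power_int_minus field_simps)
qed (rule Cset_power_int_mult[OF assms])

lemma power_int_in_Cset_power_iff:
  fixes a :: real
  assumes "a > 1" "M > 0"
  shows "a powi e \<in> Cset (a ^ M) \<longleftrightarrow> int M dvd e"
proof
  assume "a powi e \<in> Cset (a ^ M)"
  moreover have "a powi e \<noteq> 0" using assms(1) by simp
  ultimately obtain j where "a powi e = (a ^ M) powi j \<or> a powi e = - ((a ^ M) powi j)"
    unfolding Cset_def by blast
  moreover have "a powi e > 0" "(a ^ M) powi j > 0" using assms(1) by auto
  ultimately have "a powi e = (a ^ M) powi j" by auto
  then have "a powi e = a powi (int M * j)" by (simp add: power_int_power)
  then have "e = int M * j"
    using assms(1) by (metis power_int_strict_increasing less_irrefl linorder_neqE)
  then show "int M dvd e" by simp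
next
  assume "int M dvd e"
  then obtain j where "a powi e = (a ^ M) powi j" by (auto simp: power_int_power)
  then show "a powi e \<in> Cset (a ^ M)" unfolding Cset_def by blast
qed

lemma power_int_powr_commute:
  fixes a :: real
  assumes "a > 0"
  shows "(a powi k) powr p = (a powr p) powi k"
  using assms by (simp add: powr_real_of_int'[symmetric] powr_powr mult.commute)

lemma powr_mono2_power_int:
  fixes a z :: real
  assumes "a > 0" "p \<ge> 0"
  shows "a powi k \<le> z \<Longrightarrow> (a powr p) powi k \<le> z powr p"
    and "0 \<le> z \<Longrightarrow> z \<le> a powi k \<Longrightarrow> z powr p \<le> (a powr p) powi k"
  using assms by (simp_all add: powr_mono2 flip: power_int_powr_commute)

section \<open>The masses \<open>\<parallel>J\<^sub>m z\<parallel>\<^sub>p\<^sup>p\<close>\<close>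

definition Jmass :: "real \<Rightarrow> real \<Rightarrow> real \<Rightarrow> nat \<Rightarrow> (nat \<Rightarrow> real) \<Rightarrow> real" where
  "Jmass p a s m z = (\<Sum>i\<in>Jset a s m z. \<bar>z i\<bar> powr p)"

lemma Jmass_nonneg: "0 \<le> Jmass p a s m z"
  unfolding Jmass_def by (simp add: sum_nonneg)

lemma lpnorm_Jop: "lpnorm p (Jop a s m z) = Jmass p a s m z powr (1 / p)"
proof -
  have "supp (Jop a s m z) = Jset a s m z"
    unfolding Jop_def Jset_def supp_def by auto
  then show ?thesis
    unfolding lpnorm_def Jmass_def by (simp add: Jop_def)
qed

lemma Jset_mod:
  assumes "a \<noteq> 0"
  shows "Jset a (a ^ M) m z = Jset a (a ^ M) (m mod M) z"
proof -
  have "int m = int M * int (m div M) + int (m mod M)"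
    by (metis div_mult_mod_eq mult.commute of_nat_add of_nat_mult)
  then have "a powi (- int m) = (a ^ M) powi (- int (m div M)) * a powi (- int (m mod M))"
    using assms by (simp add: power_int_power power_int_add[symmetric])
  then show ?thesis
    unfolding Jset_def using assms by (simp add: mult.assoc Cset_power_int_mult_iff)
qed

lemma Jmass_mod:
  assumes "a \<noteq> 0"
  shows "Jmass p a (a ^ M) m z = Jmass p a (a ^ M) (m mod M) z"
  unfolding Jmass_def using Jset_mod[OF assms] by simp

lemma Jmass_power_int_scale:
  fixes a :: real
  assumes "a > 0"
  shows "Jmass p a s m (\<lambda>i. a powi (- int e) * z i)
    = (a powr p) powi (- int e) * Jmass p a s (m + e) z"
proof -
  have "a powi (- int m) * (a powi (- int e) * z i) = a powi (- int (m + e)) * z i" for i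
    using assms by (simp add: power_int_add[symmetric] mult.assoc[symmetric])
  then have "Jset a s m (\<lambda>i. a powi (- int e) * z i) = Jset a s (m + e) z"
    unfolding Jset_def supp_def using assms by (simp only:) simp
  then show ?thesis
    unfolding Jmass_def
    using assms by (simp add: abs_mult powr_mult power_int_powr_commute sum_distrib_left)
qed

lemma Jmass_sum_disjoint:
  assumes "finite L" "\<And>l. l \<in> L \<Longrightarrow> finite (supp (z l))"
    and disj: "disjoint_family_on (\<lambda>l. supp (z l)) L"
  shows "Jmass p a s m (\<lambda>i. \<Sum>l\<in>L. z l i) = (\<Sum>l\<in>L. Jmass p a s m (z l))"
proof -
  note single = sum_eq_single_supp[OF assms(1) _ _ disj]
  have J: "Jset a s m (\<lambda>i. \<Sum>l\<in>L. z l i) = (\<Union>l\<in>L. Jset a s m (z l))"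
    unfolding Jset_def supp_sum_disjoint[OF assms(1) disj] using single by auto
  have "Jmass p a s m (\<lambda>i. \<Sum>l\<in>L. z l i)
      = (\<Sum>l\<in>L. \<Sum>i\<in>Jset a s m (z l). \<bar>\<Sum>l'\<in>L. z l' i\<bar> powr p)"
    unfolding Jmass_def J using assms disj
    by (intro sum.UNION_disjoint) (auto simp: Jset_def disjoint_family_on_def)
  also have "\<dots> = (\<Sum>l\<in>L. Jmass p a s m (z l))"
    unfolding Jmass_def using single by (intro sum.cong) (auto simp: Jset_def)
  finally show ?thesis .
qed

lemma sum_Jmass_residues:
  fixes a :: real
  assumes "a > 1" "M > 0" "z \<in> Nset a"
  shows "(\<Sum>c<M. Jmass p a (a ^ M) c z) = (\<Sum>i\<in>supp z. \<bar>z i\<bar> powr p)"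
proof -
  have "\<exists>e. z i = a powi e \<or> z i = - (a powi e)" if "i \<in> supp z" for i
    using assms(3) that unfolding Nset_def Cset_def supp_def by auto
  then obtain e where "\<And>i. i \<in> supp z \<Longrightarrow> z i = a powi e i \<or> z i = - (a powi e i)"
    by metis
  then have e: "\<And>i. i \<in> supp z \<Longrightarrow> \<bar>z i\<bar> = a powi e i" using assms(1) by fastforce
  have "Jset a (a ^ M) c z = {i \<in> supp z. nat (e i mod int M) = c}" if "c < M" for c
  proof -
    have "a powi (- int c) * z i \<in> Cset (a ^ M) \<longleftrightarrow> int M dvd e i - int c" if "i \<in> supp z" for i
    proof -
      have "\<bar>a powi (- int c) * z i\<bar> = a powi (e i - int c)"
        using assms(1) e[OF that] by (simp add: abs_mult power_int_diff power_int_minus field_simps)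
      then show ?thesis
        using power_int_in_Cset_power_iff[OF assms(1,2)] by (metis Cset_abs_iff)
    qed
    moreover have "int M dvd e i - int c \<longleftrightarrow> nat (e i mod int M) = c" for i
      using that by (auto simp: mod_eq_dvd_iff[symmetric] nat_eq_iff)
    ultimately show ?thesis unfolding Jset_def by auto
  qed
  moreover have "finite (supp z)" using assms(3) unfolding Nset_def c00_def by simp
  moreover have "nat (e i mod int M) < M" for i using assms(2) by (simp add: nat_less_iff)
  ultimately show ?thesis
    unfolding Jmass_def
    by (subst sum.group[symmetric, where g = "\<lambda>i. nat (e i mod int M)" and T = "{..<M}"]) auto
qed

lemma sum_Jmass_eq_lpnorm_powr:
  fixes a :: real
  assumes "p > 0" "a > 1" "M > 0" "z \<in> Nset a"
  shows "(\<Sum>c<M. Jmass p a (a ^ M) c z) = lpnorm p z powr p"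
  using assms by (simp add: sum_Jmass_residues lpnorm_def powr_powr sum_nonneg)

section \<open>Block sequences and block combinations\<close>

lemma block_seq_finite_supp: "block_seq x \<Longrightarrow> finite (supp (x n))"
  unfolding block_seq_def c00_def by blast

lemma block_seq_supp_nonempty: "block_seq x \<Longrightarrow> supp (x n) \<noteq> {}"
  unfolding block_seq_def supp_eq_empty_iff by blast

lemma block_seq_supp_less:
  assumes "block_seq x" "i < j" "u \<in> supp (x i)" "v \<in> supp (x j)"
  shows "u < v"
  using assms(2,4)
proof (induction j arbitrary: v)
  case (Suc j)
  show ?case
  proof (cases "i = j")
    case False
    obtain w where "w \<in> supp (x j)" using block_seq_supp_nonempty[OF assms(1)] by blast
    then have "u < w" "w < v"
      using Suc False assms(1) unfolding block_seq_def by auto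
    then show ?thesis by simp
  qed (use assms(1,3) Suc.prems in \<open>auto simp: block_seq_def\<close>)
qed simp

lemma block_seq_disjoint_family: "block_seq x \<Longrightarrow> disjoint_family (\<lambda>n. supp (x n))"
  unfolding disjoint_family_on_def
  by (metis block_seq_supp_less disjoint_iff less_irrefl linorder_neqE)

lemma block_seq_comp:
  assumes "block_seq x" "strict_mono g"
  shows "block_seq (x \<circ> g)"
  using assms(1) block_seq_supp_less[OF assms(1) strict_monoD[OF assms(2) lessI]]
  unfolding block_seq_def by simp

lemma block_seq_of_comp:
  assumes "block_seq_of y (x \<circ> g)" "strict_mono g"
  shows "block_seq_of y x"
proof -
  obtain F c where F: "\<And>n. finite (F n) \<and> F n \<noteq> {} \<and> (\<forall>i\<in>F n. \<forall>j\<in>F (Suc n). i < j)"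
    and y: "\<And>n. y n = (\<lambda>k. \<Sum>i\<in>F n. c i * x (g i) k)" and "block_seq y"
    using assms(1) unfolding block_seq_of_def by auto
  have "inj g" using assms(2) by (rule strict_mono_imp_inj_on)
  then have "y n = (\<lambda>k. \<Sum>i\<in>g ` F n. c (inv g i) * x i k)" for n
    unfolding y by (simp add: sum.reindex inj_on_subset)
  moreover have "finite (g ` F n) \<and> g ` F n \<noteq> {} \<and> (\<forall>i\<in>g ` F n. \<forall>j\<in>g ` F (Suc n). i < j)" for n
    using F assms(2) by (auto simp: strict_mono_less)
  ultimately show ?thesis
    unfolding block_seq_of_def using \<open>block_seq y\<close>
    by (intro conjI exI[of _ "\<lambda>n. g ` F n"] exI[of _ "\<lambda>i. c (inv g i)"]) auto
qed

definition block_combination ::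
    "real \<Rightarrow> nat \<Rightarrow> (nat \<Rightarrow> nat) \<Rightarrow> (nat \<Rightarrow> nat \<Rightarrow> real) \<Rightarrow> nat \<Rightarrow> nat \<Rightarrow> real" where
  "block_combination a N e x n = (\<lambda>i. \<Sum>t<N. a powi (- int (e t)) * x (n * N + t) i)"

lemma disjoint_family_on_block_terms:
  assumes "block_seq x" "a \<noteq> 0"
  shows "disjoint_family_on (\<lambda>t. supp (\<lambda>i. a powi (- int (e t)) * x (n * N + t) i)) {..<N}"
proof -
  have "supp (\<lambda>i. a powi (- int (e t)) * x (n * N + t) i) = supp (x (n * N + t))" for t
    using assms(2) unfolding supp_def by simp
  then show ?thesis
    using block_seq_disjoint_family[OF assms(1)] unfolding disjoint_family_on_def by simp
qed

lemma supp_block_combination: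
  assumes "block_seq x" "a \<noteq> 0"
  shows "supp (block_combination a N e x n) = (\<Union>t<N. supp (x (n * N + t)))"
  unfolding block_combination_def
  using supp_sum_disjoint[OF _ disjoint_family_on_block_terms[OF assms]] assms(2)
  by (simp add: supp_def)

lemma block_combination_eq:
  assumes "block_seq x" "a \<noteq> 0" "t < N" "i \<in> supp (x (n * N + t))"
  shows "block_combination a N e x n i = a powi (- int (e t)) * x (n * N + t) i"
  unfolding block_combination_def
  by (rule sum_eq_single_supp[OF _ _ _ disjoint_family_on_block_terms[OF assms(1,2)]])
    (use assms in \<open>auto simp: supp_def\<close>)

lemma block_combination_Nset:
  assumes "block_seq x" "a \<noteq> 0" "\<And>n. x n \<in> Nset a"
  shows "block_combination a N e x n \<in> Nset a"
proof -
  have "block_combination a N e x n i \<in> Cset a" for i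
  proof (cases "i \<in> supp (block_combination a N e x n)")
    case True
    then obtain t where "t < N" "i \<in> supp (x (n * N + t))"
      using supp_block_combination[OF assms(1,2)] by auto
    then show ?thesis
      using assms by (simp add: block_combination_eq Cset_power_int_mult Nset_def)
  qed (simp add: supp_def Cset_def)
  moreover have "finite (supp (block_combination a N e x n))"
    using supp_block_combination[OF assms(1,2)] block_seq_finite_supp[OF assms(1)] by simp
  ultimately show ?thesis unfolding Nset_def c00_def by simp
qed

lemma block_seq_block_combination:
  assumes "block_seq x" "a \<noteq> 0" "N > 0"
  shows "block_seq (block_combination a N e x)"
proof -
  let ?y = "block_combination a N e x"
  note supp_y = supp_block_combination[OF assms(1,2)]
  have "supp (?y n) \<noteq> {}" for n
    using supp_y[of N e n] block_seq_supp_nonempty[OF assms(1), of "n * N"] assms(3) by fastforce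
  then have "?y n \<noteq> (\<lambda>_. 0)" for n
    by (simp add: supp_eq_empty_iff)
  moreover have "u < v" if u: "u \<in> supp (?y n)" and v: "v \<in> supp (?y (Suc n))" for u v n
  proof -
    obtain t where "t < N" and u': "u \<in> supp (x (n * N + t))"
      using u unfolding supp_y by blast
    obtain t' where v': "v \<in> supp (x (Suc n * N + t'))"
      using v unfolding supp_y by blast
    have "n * N + t < Suc n * N + t'" using \<open>t < N\<close> by simp
    from block_seq_supp_less[OF assms(1) this u' v'] show ?thesis .
  qed
  moreover have "finite (supp (?y n))" for n
    using supp_y block_seq_finite_supp[OF assms(1)] by simp
  ultimately show ?thesis unfolding block_seq_def c00_def by blast
qed

lemma block_combination_block_seq_of:
  assumes "block_seq x" "a \<noteq> 0" "N > 0"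
  shows "block_seq_of (block_combination a N e x) x"
proof -
  define F where "F n = {n * N..<n * N + N}" for n
  define c where "c i = a powi (- int (e (i mod N)))" for i
  have "block_combination a N e x n = (\<lambda>k. \<Sum>i\<in>F n. c i * x i k)" for n
  proof
    fix k
    have "(\<Sum>i\<in>F n. c i * x i k) = (\<Sum>t<N. c (t + n * N) * x (t + n * N) k)"
      unfolding F_def using sum.shift_bounds_nat_ivl[of _ 0 "n * N" N]
      by (simp add: lessThan_atLeast0 add.commute)
    then show "block_combination a N e x n k = (\<Sum>i\<in>F n. c i * x i k)"
      unfolding block_combination_def c_def by (simp add: add.commute)
  qed
  moreover have "finite (F n) \<and> F n \<noteq> {} \<and> (\<forall>i\<in>F n. \<forall>j\<in>F (Suc n). i < j)" for n
    unfolding F_def using assms(3) by auto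
  ultimately show ?thesis
    unfolding block_seq_of_def using block_seq_block_combination[OF assms]
    by (intro conjI exI[of _ F] exI[of _ c]) auto
qed

lemma Jmass_block_combination:
  assumes "block_seq x" "a > 0"
  shows "Jmass p a s m (block_combination a N e x n)
    = (\<Sum>t<N. (a powr p) powi (- int (e t)) * Jmass p a s (m + e t) (x (n * N + t)))"
proof -
  have "finite (supp (\<lambda>i. a powi (- int (e t)) * x (n * N + t) i))" for t
    using block_seq_finite_supp[OF assms(1)] assms(2) by (simp add: supp_def)
  then show ?thesis
    unfolding block_combination_def
    using Jmass_sum_disjoint[OF _ _ disjoint_family_on_block_terms] assms
    by (simp add: Jmass_power_int_scale)
qed

section \<open>Stabilising the profiles\<close>

lemma exists_strict_mono_approx_profile:
  fixes q :: "nat \<Rightarrow> nat \<Rightarrow> real"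
  assumes "\<delta> > 0" and q_nonneg: "\<And>n c. c < M \<Longrightarrow> 0 \<le> q n c"
    and q_le: "\<And>n c. c < M \<Longrightarrow> q n c \<le> K"
  obtains g :: "nat \<Rightarrow> nat" and L :: "nat \<Rightarrow> real"
  where "strict_mono g" "\<And>c. 0 \<le> L c"
    "\<And>j c. c < M \<Longrightarrow> L c \<le> q (g j) c \<and> q (g j) c \<le> L c + \<delta>"
proof -
  define pattern where "pattern n = map (\<lambda>c. nat \<lfloor>q n c / \<delta>\<rfloor>) [0..<M]" for n
  have "range pattern \<subseteq> {xs. set xs \<subseteq> {0..nat \<lfloor>K / \<delta>\<rfloor>} \<and> length xs = M}"
    unfolding pattern_def using q_le \<open>\<delta> > 0\<close>
    by (auto intro!: nat_mono floor_mono divide_right_mono)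
  then have "finite (range pattern)"
    by (rule finite_subset) (simp add: finite_lists_length_eq)
  then obtain P where "infinite (pattern -` {P})"
    using inf_img_fin_dom[OF _ infinite_UNIV_nat] by blast
  then obtain g :: "nat \<Rightarrow> nat" where g: "strict_mono g" and P: "\<And>j. pattern (g j) = P"
    using infinite_enumerate[of "pattern -` {P}"] by auto
  show thesis
  proof (rule that[OF g, of "\<lambda>c. real (P ! c) * \<delta>"])
    fix j c assume "c < M"
    define y where "y = q (g j) c / \<delta>"
    have "real (P ! c) = \<lfloor>y\<rfloor>"
      using P[of j] q_nonneg[of c "g j"] \<open>\<delta> > 0\<close> \<open>c < M\<close> by (auto simp: pattern_def y_def)
    moreover have "of_int \<lfloor>y\<rfloor> \<le> y" "y \<le> of_int \<lfloor>y\<rfloor> + 1" by linarith+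
    note this[THEN mult_right_mono, of \<delta>]
    ultimately show "real (P ! c) * \<delta> \<le> q (g j) c \<and> q (g j) c \<le> real (P ! c) * \<delta> + \<delta>"
      using \<open>\<delta> > 0\<close> by (simp add: y_def distrib_right)
  qed (use \<open>\<delta> > 0\<close> in simp)
qed

lemma ceiling_power_mult_power_int_bounds:
  fixes B :: real
  assumes "B \<ge> 2"
  shows "1 \<le> real (nat \<lceil>B ^ k\<rceil>) * B powi (- int k)"
    and "real (nat \<lceil>B ^ k\<rceil>) * B powi (- int k) \<le> 3 / 2"
proof -
  have "B ^ k > 0" using assms by simp
  then have eq: "real (nat \<lceil>B ^ k\<rceil>) * B powi (- int k) = of_int \<lceil>B ^ k\<rceil> / B ^ k"
    by (simp add: power_int_minus divide_inverse)
  have "of_int \<lceil>B ^ k\<rceil> \<le> 3 / 2 * B ^ k"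
  proof (cases k)
    case (Suc k')
    have "B ^ 1 \<le> B ^ k" using assms Suc by (intro power_increasing) auto
    then show ?thesis using assms by simp linarith
  qed simp
  then show "real (nat \<lceil>B ^ k\<rceil>) * B powi (- int k) \<le> 3 / 2"
    unfolding eq using \<open>B ^ k > 0\<close> by (simp add: field_simps)
  show "1 \<le> real (nat \<lceil>B ^ k\<rceil>) * B powi (- int k)"
    unfolding eq using \<open>B ^ k > 0\<close> by (simp add: field_simps)
qed

lemma sum_mod_shift:
  fixes f :: "nat \<Rightarrow> 'a :: cancel_comm_monoid_add"
  shows "(\<Sum>k<M. f ((m + k) mod M)) = (\<Sum>c<M. f c)"
proof (induction m)
  case (Suc m)
  have "(\<Sum>k<M. f ((m + Suc k) mod M)) + f ((m + 0) mod M) = (\<Sum>k<Suc M. f ((m + k) mod M))"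
    by (subst sum.lessThan_Suc_shift) (rule add.commute)
  also have "\<dots> = (\<Sum>k<M. f ((m + k) mod M)) + f ((m + 0) mod M)"
    by simp
  finally show ?case using Suc.IH by simp
qed simp

lemma sum_nth_concat_replicate:
  fixes f :: "nat \<Rightarrow> 'a :: comm_semiring_1" and n :: "nat \<Rightarrow> nat" and M :: nat
  defines "es \<equiv> concat (map (\<lambda>k. replicate (n k) k) [0..<M])"
  shows "(\<Sum>t<length es. f (es ! t)) = (\<Sum>k<M. of_nat (n k) * f k)"
proof -
  have "(\<Sum>t<length es. f (es ! t)) = sum_list (map f es)"
    by (simp add: sum_list_sum_nth atLeast0LessThan)
  also have "\<dots> = (\<Sum>k<M. of_nat (n k) * f k)"
    unfolding es_def by (induction M) (simp_all add: sum_list_replicate)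
  finally show ?thesis .
qed

lemma Jmass_block_combination_bounds:
  fixes a \<delta> :: real and L :: "nat \<Rightarrow> real"
  assumes "a > 0" "a powr p \<ge> 2" "M > 0" "block_seq x"
    and L: "\<And>j c. c < M \<Longrightarrow>
      L c \<le> Jmass p a (a ^ M) c (x j) \<and> Jmass p a (a ^ M) c (x j) \<le> L c + \<delta>"
    and L_nonneg: "\<And>c. 0 \<le> L c"
  defines "es \<equiv> concat (map (\<lambda>k. replicate (nat \<lceil>(a powr p) ^ k\<rceil>) k) [0..<M])"
  shows "(\<Sum>c<M. L c) \<le> Jmass p a (a ^ M) m (block_combination a (length es) ((!) es) x n)"
    and "Jmass p a (a ^ M) m (block_combination a (length es) ((!) es) x n)
      \<le> 3 / 2 * ((\<Sum>c<M. L c) + M * \<delta>)"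
proof -
  let ?B = "a powr p" and ?J = "\<lambda>k j. Jmass p a (a ^ M) k (x j)"
  let ?y = "block_combination a (length es) ((!) es) x n"
  define w where "w k = real (nat \<lceil>?B ^ k\<rceil>) * ?B powi (- int k)" for k
  note w = ceiling_power_mult_power_int_bounds[OF assms(2), folded w_def]
  have J_mod: "L ((m + k) mod M) \<le> ?J (m + k) j \<and> ?J (m + k) j \<le> L ((m + k) mod M) + \<delta>" for k j
    using L[of "(m + k) mod M" j] Jmass_mod[of a p M "m + k" "x j"] assms(1,3) by simp
  have levels: "(\<Sum>t<length es. ?B powi (- int (es ! t)) * f (es ! t)) = (\<Sum>k<M. w k * f k)" for f
    using sum_nth_concat_replicate[of "\<lambda>k. ?B powi (- int k) * f k" "\<lambda>k. nat \<lceil>?B ^ k\<rceil>" M]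
    unfolding es_def w_def by (simp add: mult.assoc)
  have y: "Jmass p a (a ^ M) m ?y
      = (\<Sum>t<length es. ?B powi (- int (es ! t)) * ?J (m + es ! t) (n * length es + t))"
    by (rule Jmass_block_combination[OF assms(4,1)])
  have "(\<Sum>c<M. L c) = (\<Sum>k<M. L ((m + k) mod M))"
    by (rule sum_mod_shift[symmetric])
  also have "\<dots> \<le> (\<Sum>k<M. w k * L ((m + k) mod M))"
    using mult_right_mono[OF w(1) L_nonneg] by (intro sum_mono) simp
  also have "\<dots> = (\<Sum>t<length es. ?B powi (- int (es ! t)) * L ((m + es ! t) mod M))"
    by (rule levels[symmetric])
  also have "\<dots> \<le> Jmass p a (a ^ M) m ?y"
    unfolding y using J_mod assms(1) by (intro sum_mono mult_left_mono) auto
  finally show "(\<Sum>c<M. L c) \<le> Jmass p a (a ^ M) m ?y" .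
  have "Jmass p a (a ^ M) m ?y
      \<le> (\<Sum>t<length es. ?B powi (- int (es ! t)) * (L ((m + es ! t) mod M) + \<delta>))"
    unfolding y using J_mod assms(1) by (intro sum_mono mult_left_mono) auto
  also have "\<dots> = (\<Sum>k<M. w k * (L ((m + k) mod M) + \<delta>))"
    by (rule levels)
  also have "\<dots> \<le> (\<Sum>k<M. 3 / 2 * (L ((m + k) mod M) + \<delta>))"
    using w(2) J_mod by (intro sum_mono mult_right_mono) (auto intro: order_trans[OF Jmass_nonneg])
  also have "\<dots> = 3 / 2 * (\<Sum>k<M. L ((m + k) mod M) + \<delta>)"
    by (rule sum_distrib_left[symmetric])
  also have "\<dots> = 3 / 2 * ((\<Sum>c<M. L c) + M * \<delta>)"
    by (simp only: sum.distrib sum_mod_shift) simp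
  finally show "Jmass p a (a ^ M) m ?y \<le> 3 / 2 * ((\<Sum>c<M. L c) + M * \<delta>)" .
qed

lemma sum_approx_profile_bounds:
  fixes B :: real and q L :: "nat \<Rightarrow> real"
  assumes "B \<ge> 2" "M > 0"
    and L: "\<And>c. c < M \<Longrightarrow> L c \<le> q c \<and> q c \<le> L c + B powi (-3) / M"
    and "B powi (-2) \<le> (\<Sum>c<M. q c)" "(\<Sum>c<M. q c) \<le> B powi (-1)"
  shows "B powi (-3) \<le> (\<Sum>c<M. L c)"
    and "3 / 2 * ((\<Sum>c<M. L c) + M * (B powi (-3) / M)) \<le> 1"
proof -
  have "(\<Sum>c<M. q c - B powi (-3) / M) \<le> (\<Sum>c<M. L c)" "(\<Sum>c<M. L c) \<le> (\<Sum>c<M. q c)"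
    using L by (auto intro!: sum_mono simp: diff_le_eq add.commute)
  then have "B powi (-2) - B powi (-3) \<le> (\<Sum>c<M. L c)" "(\<Sum>c<M. L c) \<le> B powi (-1)"
    using assms(2,4,5) by (simp_all add: sum_subtractf)
  moreover have "B powi (-1) \<le> 1 / 2" "B powi (-3) \<le> 1 / 8" "2 * B powi (-3) \<le> B powi (-2)"
    using assms(1) power_mono[of 2 B 3]
    by (simp_all add: power_int_minus field_simps power2_eq_square power3_eq_cube)
  ultimately show "B powi (-3) \<le> (\<Sum>c<M. L c)"
    and "3 / 2 * ((\<Sum>c<M. L c) + M * (B powi (-3) / M)) \<le> 1"
    using assms(2) by simp_all
qed

lemma exists_block_seq_of_Jmass_bounds:
  fixes a :: real and x :: "nat \<Rightarrow> nat \<Rightarrow> real"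
  assumes "a > 0" "a powr p \<ge> 2" "M > 0" "block_seq x" "\<And>n. x n \<in> Nset a"
    and mass: "\<And>n. (a powr p) powi (-2) \<le> (\<Sum>c<M. Jmass p a (a ^ M) c (x n))
      \<and> (\<Sum>c<M. Jmass p a (a ^ M) c (x n)) \<le> (a powr p) powi (-1)"
  shows "\<exists>y. block_seq_of y x \<and> (\<forall>n. y n \<in> Nset a) \<and>
    (\<forall>n m. (a powr p) powi (-3) \<le> Jmass p a (a ^ M) m (y n) \<and> Jmass p a (a ^ M) m (y n) \<le> 1)"
proof -
  define B where "B = a powr p"
  define \<delta> where "\<delta> = B powi (-3) / M" \<comment> \<open>total discretisation error \<open>M \<delta> = B\<^sup>-\<^sup>3\<close>\<close>
  have "\<delta> > 0" using assms(1,3) by (simp add: B_def \<delta>_def)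
  have "Jmass p a (a ^ M) c (x n) \<le> B powi (-1)" if "c < M" for c n
    using member_le_sum[of c "{..<M}" "\<lambda>c. Jmass p a (a ^ M) c (x n)"] mass[of n] that
    by (simp add: Jmass_nonneg B_def)
  then obtain g :: "nat \<Rightarrow> nat" and L :: "nat \<Rightarrow> real"
    where g: "strict_mono g" and L_nonneg: "\<And>c. 0 \<le> L c"
    and L: "\<And>j c. c < M \<Longrightarrow>
      L c \<le> Jmass p a (a ^ M) c ((x \<circ> g) j) \<and> Jmass p a (a ^ M) c ((x \<circ> g) j) \<le> L c + \<delta>"
    using exists_strict_mono_approx_profile[OF \<open>\<delta> > 0\<close>, of M "\<lambda>n c. Jmass p a (a ^ M) c (x n)"]
      Jmass_nonneg by (metis comp_apply)
  have "2 \<le> B" using assms(2) by (simp add: B_def)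
  have sum_L: "B powi (-3) \<le> (\<Sum>c<M. L c)" "3 / 2 * ((\<Sum>c<M. L c) + M * \<delta>) \<le> 1"
    using sum_approx_profile_bounds[OF \<open>2 \<le> B\<close> assms(3), of L "\<lambda>c. Jmass p a (a ^ M) c (x (g 0))"]
      L[of _ 0] mass[of "g 0"]
    unfolding B_def \<delta>_def by auto
  define es where "es = concat (map (\<lambda>k. replicate (nat \<lceil>B ^ k\<rceil>) k) [0..<M])"
  have "0 \<in> set es" using assms(3) by (simp add: es_def)
  then have "length es > 0" by (metis length_pos_if_in_set)
  have bs: "block_seq (x \<circ> g)" by (rule block_seq_comp[OF assms(4) g])
  let ?y = "block_combination a (length es) ((!) es) (x \<circ> g)"
  have bounds: "(\<Sum>c<M. L c) \<le> Jmass p a (a ^ M) m (?y n)"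
    "Jmass p a (a ^ M) m (?y n) \<le> 3 / 2 * ((\<Sum>c<M. L c) + M * \<delta>)" for m n
    unfolding es_def B_def
    by (rule Jmass_block_combination_bounds[OF assms(1-3) bs]; use L L_nonneg in blast)+
  show ?thesis
  proof (intro exI conjI allI)
    show "block_seq_of ?y x"
      using block_combination_block_seq_of[OF bs _ \<open>length es > 0\<close>] assms(1)
      by (simp add: block_seq_of_comp[OF _ g])
    fix n m
    show "?y n \<in> Nset a"
      using assms(1,5) by (simp add: block_combination_Nset[OF bs])
    show "(a powr p) powi (-3) \<le> Jmass p a (a ^ M) m (?y n)"
      using bounds(1)[of m n] sum_L(1) unfolding B_def by linarith
    show "Jmass p a (a ^ M) m (?y n) \<le> 1"
      using bounds(2)[of m n] sum_L(2) by linarith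
  qed
qed

lemma sum_Jmass_bounds_of_lpnorm_bounds:
  fixes a :: real
  assumes "p > 0" "a > 1" "M > 0" "z \<in> Nset a"
    and "a powi k \<le> lpnorm p z" "lpnorm p z \<le> a powi l"
  shows "(a powr p) powi k \<le> (\<Sum>c<M. Jmass p a (a ^ M) c z)
    \<and> (\<Sum>c<M. Jmass p a (a ^ M) c z) \<le> (a powr p) powi l"
proof -
  have "0 \<le> lpnorm p z" by (simp add: lpnorm_def)
  then show ?thesis
    using assms powr_mono2_power_int[of a p] by (simp add: sum_Jmass_eq_lpnorm_powr)
qed

lemma lpnorm_Jop_bounds_of_Jmass_bounds:
  fixes a :: real
  assumes "p > 0" "a > 0" "(a powr p) powi k \<le> Jmass p a s m z" "Jmass p a s m z \<le> 1"
  shows "a powi k \<le> lpnorm p (Jop a s m z) \<and> lpnorm p (Jop a s m z) \<le> 1"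
proof -
  have "(a powr p) powr (1 / p) = a" using assms(1,2) by (simp add: powr_powr)
  then show ?thesis
    using powr_mono2_power_int(1)[of "a powr p" "1 / p" k "Jmass p a s m z"] assms
    by (simp add: lpnorm_Jop powr_le1 Jmass_nonneg)
qed

lemma log_floor_base_powr_ge_two:
  fixes \<alpha> p :: real and r M :: nat
  assumes "p > 0" "r > 1" "M = nat \<lfloor>log 2 (real r)\<rfloor>" "\<alpha> > 0" "\<alpha> ^ M = real r powr (1 / p)"
  shows "M > 0" and "\<alpha> powr p \<ge> 2"
proof -
  have "1 \<le> log 2 (real r)" using assms(2) by simp
  then show "M > 0" using assms(3) by linarith
  have "(\<alpha> powr p) ^ M = (\<alpha> ^ M) powr p"
    using assms(4) by (simp add: powr_realpow[symmetric] powr_powr mult.commute)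
  also have "\<dots> = real r" using assms(1,5) by (simp add: powr_powr)
  also have "\<dots> = 2 powr log 2 (real r)" using assms(2) by simp
  also have "2 ^ M \<le> \<dots>"
    using assms(3) \<open>1 \<le> log 2 (real r)\<close> by (simp add: powr_realpow[symmetric])
  finally show "\<alpha> powr p \<ge> 2"
    using \<open>M > 0\<close> by (simp add: power_mono_iff)
qed

theorem mainTheorem6:
  fixes p \<alpha> s :: real and r M :: nat and x :: "nat \<Rightarrow> nat \<Rightarrow> real"
  assumes "1 < p"
    and "r > 1"
    and "s = real r powr (1 / p)"
    and "M = nat \<lfloor>log 2 (real r)\<rfloor>"
    and "\<alpha> > 0" and "\<alpha> ^ M = s"
    and "block_seq x" and "\<forall>n. x n \<in> Nset \<alpha>"
    and "\<forall>n. \<alpha> powi (-2) \<le> lpnorm p (x n) \<and> lpnorm p (x n) \<le> \<alpha> powi (-1)"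
  shows "\<exists>y :: nat \<Rightarrow> nat \<Rightarrow> real. block_seq_of y x \<and> (\<forall>n. y n \<in> Nset \<alpha>) \<and>
           (\<forall>n. \<forall>m\<ge>1. \<alpha> powi (-3) \<le> lpnorm p (Jop \<alpha> s m (y n)) \<and>
                        lpnorm p (Jop \<alpha> s m (y n)) \<le> 1)"
proof -
  have "p > 0" using assms(1) by simp
  note M_B = log_floor_base_powr_ge_two[OF \<open>p > 0\<close> assms(2,4,5), folded assms(3,6)]
  have "\<alpha> > 1"
    using powr_le1[of p \<alpha>] M_B(2) \<open>p > 0\<close> assms(5) by force
  have mass: "(\<alpha> powr p) powi (-2) \<le> (\<Sum>c<M. Jmass p \<alpha> (\<alpha> ^ M) c (x n))
      \<and> (\<Sum>c<M. Jmass p \<alpha> (\<alpha> ^ M) c (x n)) \<le> (\<alpha> powr p) powi (-1)" for n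
    using sum_Jmass_bounds_of_lpnorm_bounds[OF \<open>p > 0\<close> \<open>\<alpha> > 1\<close> M_B(1)] assms(8,9) by blast
  obtain y where "block_seq_of y x" "\<forall>n. y n \<in> Nset \<alpha>"
    and "\<And>n m. (\<alpha> powr p) powi (-3) \<le> Jmass p \<alpha> s m (y n) \<and> Jmass p \<alpha> s m (y n) \<le> 1"
    using exists_block_seq_of_Jmass_bounds[OF assms(5) M_B(2,1) assms(7) assms(8)[rule_format] mass]
    unfolding assms(6) by blast
  then show ?thesis
    using lpnorm_Jop_bounds_of_Jmass_bounds[OF \<open>p > 0\<close> assms(5)] by blast
qed

end
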